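(* Let $g:(0,\infty)\to(0,\infty)$ be three times continuously differentiable with $g(t)=t\,g(1/t)$ for all $t>0$, let $\mu$ be a symmetric probability density on $\mathbb{R}$ with $\int_{\mathbb{R}}g^{(j)}(e^{sw})\mu(w)dw<\infty$ for all $s>0$ and $j\in\{0,1,2,3\}$, and let $f$ be a smooth positive probability density on $\mathbb{R}$ with $\phi=\log f$. Then for all $x_i,u_i\in\mathbb{R}$, $\log\Big(\frac{f(x_i+\sigma u_i)}{f(x_i)}\frac{g(e^{-\phi'(x_i+\sigma u_i)\sigma u_i})}{g(e^{\phi'(x_i)\sigma u_i})}\Big)=\mathcal{O}(\sigma^3)$ as $\sigma\to0$.
   Context: $g^{(j)}$ is the $j$-th derivative of $g$. *)

theory Defs
  imports "HOL-Analysis.Analysis" "HOL-Library.Landau_Symbols"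
begin

definition C3_on_pos :: "(real \<Rightarrow> real) \<Rightarrow> bool" where
  "C3_on_pos g \<longleftrightarrow>
     (\<forall>j<3. \<forall>t>0. (((deriv ^^ j) g) has_real_derivative ((deriv ^^ Suc j) g t)) (at t))
     \<and> continuous_on {0<..} ((deriv ^^ 3) g)"

definition smooth_real :: "(real \<Rightarrow> real) \<Rightarrow> bool" where
  "smooth_real f \<longleftrightarrow>
     (\<forall>n. \<forall>x. (((deriv ^^ n) f) has_real_derivative ((deriv ^^ Suc n) f x)) (at x))"

definition prob_density :: "(real \<Rightarrow> real) \<Rightarrow> bool" where
  "prob_density p \<longleftrightarrow> (\<forall>x. p x \<ge> 0) \<and> integrable lborel p \<and> integral\<^sup>L lborel p = 1"

end

theory Submission
  imports Defs
begin

(* Write t = sigma * u, phi = ln f and K s = ln (g (exp s)) - s / 2.  The balance condition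
   g t = t * g (1 / t) says exactly that K is even, and it splits the logarithm into
     [phi (x + t) - phi x - t * (phi' (x + t) + phi' x) / 2] + [K (phi' (x + t) * t) - K (phi' x * t)].
   The first bracket is the error of the trapezoidal rule, O(t^3) because phi is C^3.  In the
   second, K' is O(s) at 0 (K is even and C^2), both arguments are O(t) and they differ by O(t^2),
   so the mean value theorem gives O(t^3) again. *)

lemma bigo_power_Suc_of_derivative:
  fixes R R' :: "real \<Rightarrow> real"
  assumes R'_bigo: "R' \<in> O[nhds 0](\<lambda>s. s ^ n)"
    and deriv: "\<And>s. (R has_real_derivative R' s) (at s)"
    and R_0: "R 0 = 0"
  shows "R \<in> O[nhds 0](\<lambda>s. s ^ Suc n)"
proof -
  obtain c where "c > 0" and "eventually (\<lambda>s. \<bar>R' s\<bar> \<le> c * \<bar>s\<bar> ^ n) (nhds 0)"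
    using landau_o.bigE[OF R'_bigo] by (auto simp: power_abs)
  then obtain d where "d > 0" and bound: "\<And>s. \<bar>s\<bar> < d \<Longrightarrow> \<bar>R' s\<bar> \<le> c * \<bar>s\<bar> ^ n"
    by (auto simp: eventually_nhds_metric dist_real_def)
  have "\<bar>R t\<bar> \<le> c * \<bar>t\<bar> ^ Suc n" if "\<bar>t\<bar> < d" for t
  proof -
    have "norm (R t - R 0) \<le> c * \<bar>t\<bar> ^ n * norm (t - 0)"
    proof (rule field_differentiable_bound[where S="closed_segment 0 t"])
      fix s assume "s \<in> closed_segment 0 t"
      then have "\<bar>s\<bar> \<le> \<bar>t\<bar>"
        by (auto simp: closed_segment_eq_real_ivl split: if_splits)
      then have "c * \<bar>s\<bar> ^ n \<le> c * \<bar>t\<bar> ^ n"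
        using \<open>c > 0\<close> by (intro mult_left_mono power_mono) auto
      then show "norm (R' s) \<le> c * \<bar>t\<bar> ^ n"
        using bound[of s] \<open>\<bar>s\<bar> \<le> \<bar>t\<bar>\<close> that by simp
      show "(R has_field_derivative R' s) (at s within closed_segment 0 t)"
        using deriv has_field_derivative_at_within by blast
    qed auto
    then show ?thesis using R_0 by (simp add: mult.commute mult.left_commute)
  qed
  then have "eventually (\<lambda>t. norm (R t) \<le> c * norm (t ^ Suc n)) (nhds 0)"
    using \<open>d > 0\<close> by (auto simp: eventually_nhds_metric dist_real_def power_abs abs_mult)
  then show ?thesis by (rule bigoI)
qed

lemma isCont_shift_bigo_1:
  fixes F :: "real \<Rightarrow> real"
  assumes "isCont F x"
  shows "(\<lambda>s. F (x + s)) \<in> O[nhds 0](\<lambda>_. 1)"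
proof (rule bigoI_tendsto)
  show "((\<lambda>s. F (x + s) / 1) \<longlongrightarrow> F x) (nhds 0)"
    using assms by (auto intro!: tendsto_eq_intros isCont_tendsto_compose[of x F] filterlim_ident)
qed simp

lemma DERIV_shift_add:
  fixes G G' :: "real \<Rightarrow> real"
  assumes "\<And>y. (G has_real_derivative G' y) (at y)"
  shows "((\<lambda>s. G (x + s)) has_real_derivative G' (x + s)) (at s)"
  using DERIV_chain2[OF assms DERIV_add[OF DERIV_const DERIV_ident]] by simp

lemma trapezoid_remainder_bigo:
  fixes F F' F'' F''' :: "real \<Rightarrow> real"
  assumes F: "\<And>y. (F has_real_derivative F' y) (at y)"
    and F': "\<And>y. (F' has_real_derivative F'' y) (at y)"
    and F'': "\<And>y. (F'' has_real_derivative F''' y) (at y)"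
    and F''': "isCont F''' x"
  shows "(\<lambda>t. F (x + t) - F x - t * (F' (x + t) + F' x) / 2) \<in> O[nhds 0](\<lambda>t. t ^ 3)"
proof -
  have "(\<lambda>s. - (s * F''' (x + s))) \<in> O[nhds 0](\<lambda>s. s)"
    using landau_o.big.mult[OF landau_o.big_refl isCont_shift_bigo_1[OF F''']] by simp
  then have "(\<lambda>s. F' (x + s) - F' x - s * F'' (x + s)) \<in> O[nhds 0](\<lambda>s. s ^ 2)"
    by (rule bigo_power_Suc_of_derivative[where n=1, simplified Suc_1 power_one_right])
       (auto intro!: derivative_eq_intros DERIV_shift_add F' F'')
  then have "(\<lambda>s. (F' (x + s) - F' x - s * F'' (x + s)) / 2) \<in> O[nhds 0](\<lambda>s. s ^ 2)"
    by simp
  then show ?thesis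
    by (rule bigo_power_Suc_of_derivative[where n=2, simplified])
       (auto intro!: derivative_eq_intros DERIV_shift_add F F', simp add: field_simps)
qed

lemma DERIV_even_eq_0:
  fixes K :: "real \<Rightarrow> real"
  assumes even: "\<And>s. K (- s) = K s"
    and deriv: "(K has_real_derivative K') (at 0)"
  shows "K' = 0"
proof -
  have "(K has_real_derivative K') (at (- 0))"
    using deriv by simp
  from DERIV_chain2[OF this DERIV_minus[OF DERIV_ident]]
  have "((\<lambda>s. K (- s)) has_real_derivative K' * - 1) (at 0)" .
  then have "(K has_real_derivative - K') (at 0)"
    using even by simp
  then have "K' = - K'"
    by (rule DERIV_unique[OF deriv])
  then show ?thesis
    by simp
qed

lemma increment_bigo_of_flat_derivative:
  fixes K K' :: "real \<Rightarrow> real" and a b :: "'a \<Rightarrow> real"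
  assumes deriv: "\<And>s. (K has_real_derivative K' s) (at s)"
    and flat: "K' \<in> O[nhds 0](\<lambda>s. s)"
    and a: "(a \<longlongrightarrow> 0) F" and b: "(b \<longlongrightarrow> 0) F"
  shows "(\<lambda>z. K (a z) - K (b z)) \<in> O[F](\<lambda>z. (\<bar>a z\<bar> + \<bar>b z\<bar>) * (a z - b z))"
proof -
  obtain c where "c > 0" and "eventually (\<lambda>s. \<bar>K' s\<bar> \<le> c * \<bar>s\<bar>) (nhds 0)"
    using landau_o.bigE[OF flat] by auto
  then obtain d where "d > 0" and bound: "\<And>s. \<bar>s\<bar> < d \<Longrightarrow> \<bar>K' s\<bar> \<le> c * \<bar>s\<bar>"
    by (auto simp: eventually_nhds_metric dist_real_def)
  have "eventually (\<lambda>z. \<bar>a z\<bar> < d \<and> \<bar>b z\<bar> < d) F"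
    using tendstoD[OF a \<open>d > 0\<close>] tendstoD[OF b \<open>d > 0\<close>]
    by eventually_elim (simp add: dist_real_def)
  then have "eventually (\<lambda>z. norm (K (a z) - K (b z))
      \<le> c * norm ((\<bar>a z\<bar> + \<bar>b z\<bar>) * (a z - b z))) F"
  proof eventually_elim
    case (elim z)
    have "norm (K (a z) - K (b z)) \<le> c * (\<bar>a z\<bar> + \<bar>b z\<bar>) * norm (a z - b z)"
    proof (rule field_differentiable_bound[where S="closed_segment (b z) (a z)"])
      fix s assume "s \<in> closed_segment (b z) (a z)"
      then have "\<bar>s\<bar> \<le> max \<bar>a z\<bar> \<bar>b z\<bar>"
        by (auto simp: closed_segment_eq_real_ivl split: if_splits)
      then have "\<bar>s\<bar> < d" and "c * \<bar>s\<bar> \<le> c * (\<bar>a z\<bar> + \<bar>b z\<bar>)"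
        using elim \<open>c > 0\<close> by auto
      then show "norm (K' s) \<le> c * (\<bar>a z\<bar> + \<bar>b z\<bar>)"
        using bound by fastforce
      show "(K has_field_derivative K' s) (at s within closed_segment (b z) (a z))"
        using deriv has_field_derivative_at_within by blast
    qed auto
    then show ?case
      by (simp add: abs_mult mult.assoc)
  qed
  then show ?thesis by (rule bigoI)
qed

definition log_balance :: "(real \<Rightarrow> real) \<Rightarrow> real \<Rightarrow> real" where
  "log_balance g s = ln (g (exp s)) - s / 2"

lemma log_balance_even:
  assumes g_pos: "\<forall>t>0. g t > 0"
    and g_sym: "\<forall>t>0. g t = t * g (1 / t)"
  shows "log_balance g (- s) = log_balance g s"
proof -
  have "g (exp s) = exp s * g (exp (- s))"
    using g_sym[rule_format, of "exp s"] by (simp add: exp_minus inverse_eq_divide)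
  then have "ln (g (exp s)) = s + ln (g (exp (- s)))"
    using g_pos[rule_format, of "exp (- s)"] by (simp add: ln_mult)
  then show ?thesis
    unfolding log_balance_def by simp
qed

lemma log_balance_derivative_bigo:
  assumes g_C3: "C3_on_pos g"
    and g_pos: "\<forall>t>0. g t > 0"
    and g_sym: "\<forall>t>0. g t = t * g (1 / t)"
  obtains K' where "\<And>s. (log_balance g has_real_derivative K' s) (at s)"
    and "K' \<in> O[nhds 0](\<lambda>s. s)"
proof -
  have dg: "((deriv ^^ n) g has_real_derivative (deriv ^^ Suc n) g t) (at t)" if "n < 3" "t > 0" for n t
    using g_C3 that unfolding C3_on_pos_def by blast
  define g1 where "g1 = deriv g"
  define g2 where "g2 = deriv g1"
  have g_exp: "((\<lambda>s. g (exp s)) has_real_derivative g1 (exp s) * exp s) (at s)" for s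
    using DERIV_chain2[OF dg[of 0] DERIV_exp] by (simp add: g1_def)
  have g1_exp: "((\<lambda>s. g1 (exp s)) has_real_derivative g2 (exp s) * exp s) (at s)" for s
    using DERIV_chain2[OF dg[of 1] DERIV_exp] by (simp add: g1_def g2_def)
  have "isCont g2 (exp s)" for s
    using DERIV_isCont[OF dg[of 2]] by (simp add: g1_def g2_def numeral_2_eq_2)
  then have g2_exp_cont: "isCont (\<lambda>s. g2 (exp s)) s" for s
    by (rule isCont_o2[OF isCont_exp])
  have g_exp_pos: "g (exp s) > 0" for s
    using g_pos by simp
  have ln_g_exp: "((\<lambda>s. ln (g (exp s))) has_real_derivative g1 (exp s) * exp s / g (exp s)) (at s)" for s
    using DERIV_chain2[OF DERIV_ln_divide[OF g_exp_pos] g_exp] by simp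
  define K' where "K' s = g1 (exp s) * exp s / g (exp s) - 1 / 2" for s
  define K'' where "K'' s = ((g2 (exp s) * exp s * exp s + exp s * g1 (exp s)) * g (exp s)
      - g1 (exp s) * exp s * (g1 (exp s) * exp s)) / (g (exp s) * g (exp s))" for s
  have K': "(log_balance g has_real_derivative K' s) (at s)" for s
    unfolding log_balance_def[abs_def] K'_def
    using DERIV_diff[OF ln_g_exp DERIV_cdivide[OF DERIV_ident, of 2]] by simp
  have K'': "(K' has_real_derivative K'' s) (at s)" for s
    unfolding K'_def[abs_def] K''_def
    using DERIV_diff[OF DERIV_divide[OF DERIV_mult[OF g1_exp DERIV_exp] g_exp] DERIV_const]
      g_exp_pos[of s] by simp
  have "isCont K'' 0"
    unfolding K''_def[abs_def] using g_exp_pos[of 0]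
    by (intro continuous_intros g2_exp_cont DERIV_isCont[OF g_exp] DERIV_isCont[OF g1_exp]) auto
  from isCont_shift_bigo_1[OF this] have "K'' \<in> O[nhds 0](\<lambda>_. 1)"
    by simp
  moreover have "K' 0 = 0"
    using DERIV_even_eq_0[OF log_balance_even[OF g_pos g_sym] K'] .
  ultimately have "K' \<in> O[nhds 0](\<lambda>s. s)"
    by (rule bigo_power_Suc_of_derivative[where n=0, simplified, OF _ K''])
  with K' show thesis ..
qed

lemma ln_smooth_derivatives:
  fixes f :: "real \<Rightarrow> real"
  assumes f_smooth: "smooth_real f"
    and f_pos: "\<forall>x. f x > 0"
  obtains D' D'' where "\<And>y. ((\<lambda>y. ln (f y)) has_real_derivative deriv (\<lambda>y. ln (f y)) y) (at y)"
    and "\<And>y. (deriv (\<lambda>y. ln (f y)) has_real_derivative D' y) (at y)"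
    and "\<And>y. (D' has_real_derivative D'' y) (at y)"
    and "\<And>y. isCont D'' y"
proof -
  have df: "((deriv ^^ n) f has_real_derivative (deriv ^^ Suc n) f y) (at y)" for n y
    using f_smooth unfolding smooth_real_def by blast
  define f1 where "f1 = deriv f"
  define f2 where "f2 = deriv f1"
  define f3 where "f3 = deriv f2"
  have d0: "(f has_real_derivative f1 y) (at y)" for y
    using df[of 0] by (simp add: f1_def)
  have d1: "(f1 has_real_derivative f2 y) (at y)" for y
    using df[of 1] by (simp add: f1_def f2_def)
  have d2: "(f2 has_real_derivative f3 y) (at y)" for y
    using df[of 2] by (simp add: f1_def f2_def f3_def numeral_2_eq_2)
  have "isCont f3 y" for y
    using DERIV_isCont[OF df[of 3]] by (simp add: f1_def f2_def f3_def numeral_3_eq_3)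
  then have cont: "isCont f y" "isCont f1 y" "isCont f2 y" "isCont f3 y" for y
    using DERIV_isCont d0 d1 d2 by blast+
  have f_nz: "f y \<noteq> 0" for y
    using f_pos by (metis less_irrefl)
  define D where "D y = f1 y / f y" for y
  define D' where "D' y = f2 y / f y - (D y)\<^sup>2" for y
  define D'' where "D'' y = (f3 y * f y - f2 y * f1 y) / (f y)\<^sup>2 - 2 * D y * D' y" for y
  have ln_f: "((\<lambda>y. ln (f y)) has_real_derivative D y) (at y)" for y
    unfolding D_def using f_pos d0
    by (auto intro!: derivative_eq_intros simp: field_simps)
  then have "deriv (\<lambda>y. ln (f y)) = D"
    using DERIV_imp_deriv by blast
  moreover have "(D has_real_derivative D' y) (at y)" for y
    unfolding D_def D'_def using f_nz d0 d1
    by (auto intro!: derivative_eq_intros simp: field_simps power2_eq_square)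
  moreover have "(D' has_real_derivative D'' y) (at y)" for y
    unfolding D_def D'_def D''_def using f_nz d0 d1 d2
    by (auto intro!: derivative_eq_intros simp: field_simps power2_eq_square)
  moreover have "isCont D'' y" for y
    unfolding D''_def D'_def D_def using f_nz cont
    by (auto intro!: continuous_intros)
  ultimately show thesis
    using ln_f that by metis
qed

lemma ln_ratio_split:
  assumes f_pos: "\<forall>x. f x > 0"
    and g_pos: "\<forall>t>0. g t > 0"
    and g_sym: "\<forall>t>0. g t = t * g (1 / t)"
  shows "ln ((f (x + t) / f x) * (g (exp (- d * t)) / g (exp (c * t))))
    = (ln (f (x + t)) - ln (f x) - t * (d + c) / 2)
      + (log_balance g (d * t) - log_balance g (c * t))"
proof -
  have ln_g: "ln (g (exp s)) = log_balance g s + s / 2" for s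
    by (simp add: log_balance_def)
  have ln_g_left: "ln (g (exp (- d * t))) = log_balance g (d * t) - d * t / 2"
    using ln_g[of "- d * t"] log_balance_even[OF g_pos g_sym, of "d * t"] by simp
  have "f (x + t) > 0" "f x > 0" "g (exp (- d * t)) > 0" "g (exp (c * t)) > 0"
    using f_pos g_pos by auto
  then have "ln ((f (x + t) / f x) * (g (exp (- d * t)) / g (exp (c * t))))
      = ln (f (x + t)) - ln (f x) + ln (g (exp (- d * t))) - ln (g (exp (c * t)))"
    by (simp add: ln_mult ln_div)
  also have "\<dots> = ln (f (x + t)) - ln (f x) + (log_balance g (d * t) - d * t / 2)
      - (log_balance g (c * t) + c * t / 2)"
    by (simp only: ln_g_left ln_g[of "c * t"])
  also have "\<dots> = (ln (f (x + t)) - ln (f x) - t * (d + c) / 2)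
      + (log_balance g (d * t) - log_balance g (c * t))"
    by (simp add: algebra_simps)
  finally show ?thesis .
qed

lemma ln_ratio_bigo:
  fixes g f :: "real \<Rightarrow> real"
  assumes g_C3: "C3_on_pos g"
    and g_pos: "\<forall>t>0. g t > 0"
    and g_sym: "\<forall>t>0. g t = t * g (1 / t)"
    and f_smooth: "smooth_real f"
    and f_pos: "\<forall>x. f x > 0"
  shows "(\<lambda>t. ln ((f (x + t) / f x) *
            (g (exp (- deriv (\<lambda>y. ln (f y)) (x + t) * t)) / g (exp (deriv (\<lambda>y. ln (f y)) x * t)))))
          \<in> O[nhds 0](\<lambda>t. t ^ 3)"
proof -
  define D where "D = deriv (\<lambda>y. ln (f y))"
  obtain D' D'' where ln_f: "\<And>y. ((\<lambda>y. ln (f y)) has_real_derivative D y) (at y)"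
    and D: "\<And>y. (D has_real_derivative D' y) (at y)"
    and D': "\<And>y. (D' has_real_derivative D'' y) (at y)"
    and D'': "\<And>y. isCont D'' y"
    unfolding D_def using ln_smooth_derivatives[OF f_smooth f_pos] by blast
  obtain K' where K': "\<And>s. (log_balance g has_real_derivative K' s) (at s)"
    and K'_flat: "K' \<in> O[nhds 0](\<lambda>s. s)"
    using log_balance_derivative_bigo[OF g_C3 g_pos g_sym] by blast
  have trapezoid: "(\<lambda>t. ln (f (x + t)) - ln (f x) - t * (D (x + t) + D x) / 2) \<in> O[nhds 0](\<lambda>t. t ^ 3)"
    by (rule trapezoid_remainder_bigo[OF ln_f D D' D''])
  define a where "a t = D (x + t) * t" for t
  define b where "b t = D x * t" for t
  have D_shift: "(\<lambda>t. D (x + t)) \<in> O[nhds 0](\<lambda>_. 1)"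
    using isCont_shift_bigo_1[OF DERIV_isCont[OF D]] .
  have "(a \<longlongrightarrow> 0) (nhds 0)" "(b \<longlongrightarrow> 0) (nhds 0)"
    unfolding a_def b_def using DERIV_isCont[OF D, of x]
    by (auto intro!: tendsto_eq_intros isCont_tendsto_compose[of x D] filterlim_ident)
  then have balance_bigo: "(\<lambda>t. log_balance g (a t) - log_balance g (b t))
      \<in> O[nhds 0](\<lambda>t. (\<bar>a t\<bar> + \<bar>b t\<bar>) * (a t - b t))"
    by (rule increment_bigo_of_flat_derivative[OF K' K'_flat])
  have "a \<in> O[nhds 0](\<lambda>t. t)"
    unfolding a_def using landau_o.big.mult[OF D_shift landau_o.big_refl[of "\<lambda>t. t"]] by simp
  moreover have "b \<in> O[nhds 0](\<lambda>t. t)"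
    unfolding b_def by (intro bigoI[of _ "\<bar>D x\<bar>"]) (simp add: abs_mult)
  ultimately have "(\<lambda>t. \<bar>a t\<bar> + \<bar>b t\<bar>) \<in> O[nhds 0](\<lambda>t. t)"
    by (intro sum_in_bigo) simp_all
  moreover have "(\<lambda>t. a t - b t) \<in> O[nhds 0](\<lambda>t. t ^ 2)"
  proof -
    have "(\<lambda>t. D (x + t) - D x) \<in> O[nhds 0](\<lambda>t. t)"
      using isCont_shift_bigo_1[OF DERIV_isCont[OF D']]
      by (rule bigo_power_Suc_of_derivative[where n=0, simplified])
         (auto intro!: derivative_eq_intros DERIV_shift_add[OF D])
    from landau_o.big.mult_right[OF this, of "\<lambda>t. t"] show ?thesis
      unfolding a_def b_def by (simp add: algebra_simps power2_eq_square)
  qed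
  ultimately have "(\<lambda>t. (\<bar>a t\<bar> + \<bar>b t\<bar>) * (a t - b t)) \<in> O[nhds 0](\<lambda>t. t * t ^ 2)"
    by (rule landau_o.big.mult)
  then have "(\<lambda>t. (\<bar>a t\<bar> + \<bar>b t\<bar>) * (a t - b t)) \<in> O[nhds 0](\<lambda>t. t ^ 3)"
    by (simp add: power3_eq_cube power2_eq_square mult.assoc)
  with balance_bigo have "(\<lambda>t. log_balance g (a t) - log_balance g (b t)) \<in> O[nhds 0](\<lambda>t. t ^ 3)"
    by (rule landau_o.big_trans)
  with trapezoid show ?thesis
    unfolding a_def b_def D_def[symmetric] ln_ratio_split[OF f_pos g_pos g_sym]
    by (rule sum_in_bigo)
qed

theorem lemma12:
  fixes g f \<mu> :: "real \<Rightarrow> real"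
  assumes g_C3: "C3_on_pos g"
    and g_pos: "\<forall>t>0. g t > 0"
    and g_sym: "\<forall>t>0. g t = t * g (1 / t)"
    and mu_dens: "prob_density \<mu>"
    and mu_sym: "\<forall>w. \<mu> (- w) = \<mu> w"
    and mu_int: "\<forall>s>0. \<forall>j\<le>3. integrable lborel (\<lambda>w. (deriv ^^ j) g (exp (s * w)) * \<mu> w)"
    and f_smooth: "smooth_real f"
    and f_pos: "\<forall>x. f x > 0"
    and f_dens: "prob_density f"
  shows "\<forall>x u. (\<lambda>\<sigma>. ln ((f (x + \<sigma> * u) / f x) *
              (g (exp (- deriv (\<lambda>y. ln (f y)) (x + \<sigma> * u) * \<sigma> * u))
               / g (exp (deriv (\<lambda>y. ln (f y)) x * \<sigma> * u)))))
            \<in> O[at 0](\<lambda>\<sigma>. \<sigma> ^ 3)"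
proof -
  have scale_tendsto: "((\<lambda>\<sigma>. \<sigma> * u) \<longlongrightarrow> 0) (at 0)" for u :: real
    by (auto intro!: tendsto_eq_intros)
  have scale_bigo: "(\<lambda>\<sigma>. (\<sigma> * u) ^ 3) \<in> O[at 0](\<lambda>\<sigma>. \<sigma> ^ 3)" for u :: real
    by (intro bigoI[of _ "\<bar>u\<bar> ^ 3"]) (simp add: power_mult_distrib abs_mult power_abs)
  have "(\<lambda>\<sigma>. ln ((f (x + \<sigma> * u) / f x) *
            (g (exp (- deriv (\<lambda>y. ln (f y)) (x + \<sigma> * u) * (\<sigma> * u)))
             / g (exp (deriv (\<lambda>y. ln (f y)) x * (\<sigma> * u))))))
          \<in> O[at 0](\<lambda>\<sigma>. \<sigma> ^ 3)" for x u :: real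
    \<comment> \<open>ln_ratio_bigo is stated at nhds 0, not at 0, so that this composition also works for u = 0\<close>
    using landau_o.big.compose[OF ln_ratio_bigo[OF g_C3 g_pos g_sym f_smooth f_pos] scale_tendsto]
      scale_bigo
    by (rule landau_o.big_trans)
  then show ?thesis
    unfolding mult.assoc by blast
qed

end
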